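(* Let $K\ge 1$, $a\in\mathbb{R}$, and $\sigma=\tanh$ applied element-wise. For parameters $\bm c,\bm w,\bm b,\bm c_p\in\mathbb{R}^K$ define, for $x\in[0,2\pi]$, $$\hat u(x)=\bm c^\top\sigma(\bm w x+\bm b)=\sum_{k=1}^K c_k\tanh(w_kx+b_k),\qquad \hat p(x)=\bm c_p^\top\sigma(\bm w x+\bm b)=\sum_{k=1}^K c_{p,k}\tanh(w_kx+b_k),$$ and the loss functionals $$\mathcal L_{\mathcal F}(\bm c,\bm w,\bm b)=\frac1{2\pi}\int_0^{2\pi}\Big(\hat u''(x)+a^2\sin(ax)\Big)^2\,dx,$$ $$\tilde{\mathcal L}_{\mathcal F}(\bm c,\bm w,\bm b,\bm c_p)=\frac1{2\pi}\int_0^{2\pi}\Big[\big(\hat p'(x)+a^2\sin(ax)\big)^2+\big(\hat p(x)-\hat u'(x)\big)^2\Big]\,dx .$$ Set $S=\sum_{l=1}^K|c_l|w_l^2+a^2$ and $T=\|\bm c_p\|_1+\sum_{l=1}^K\max(|c_l|,|c_{p,l}|)\,|w_l|+a^2$. Then there is an absolute constant $C>0$ (independent of $K$, $a$ and all parameters) such that for all parameter values and every $k=1,\dots,K$: $$\Big|\frac{\partial\mathcal L_{\mathcal F}}{\partial c_k}\Big|\le C\,S\,w_k^2,\quad \Big|\frac{\partial\mathcal L_{\mathcal F}}{\partial w_k}\Big|\le C\,S\,|c_k|\,|w_k|\,(|w_k|+1),\quad \Big|\frac{\partial\mathcal L_{\mathcal F}}{\partial b_k}\Big|\le C\,S\,|c_k|\,w_k^2,$$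 and $$\Big|\frac{\partial\tilde{\mathcal L}_{\mathcal F}}{\partial c_k}\Big|\le C\,T\,|w_k|,\quad \Big|\frac{\partial\tilde{\mathcal L}_{\mathcal F}}{\partial w_k}\Big|\le C\,T\,\max(|c_k|,|c_{p,k}|)\max(|w_k|,1),$$ $$\Big|\frac{\partial\tilde{\mathcal L}_{\mathcal F}}{\partial b_k}\Big|\le C\,T\,\max(|c_k|,|c_{p,k}|)\max(|w_k|,1),\quad \Big|\frac{\partial\tilde{\mathcal L}_{\mathcal F}}{\partial c_{p,k}}\Big|\le C\,T\,\max(|w_k|,1).$$
   Context: $\hat u'$, $\hat u''$, $\hat p'$ denote derivatives with respect to $x$. $\mathcal L_{\mathcal F}$ is the (continuous) PDE residual loss for the 1D Poisson equation $u''=-a^2\sin(ax)$ on $(0,2\pi)$, and $\tilde{\mathcal L}_{\mathcal F}$ is the PDE residual loss for the reformulated system $p'=-a^2\sin(ax)$, $p=u'$ (the "extra field" $p$). $\|\cdot\|_1$ is the $\ell^1$ norm on $\mathbb{R}^K$. *)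

theory Defs
  imports "HOL-Analysis.Analysis"
begin

text \<open>Parameter vectors in R^K are functions nat => real; only indices 0..K-1 are used.\<close>

definition u_hat :: "nat \<Rightarrow> (nat \<Rightarrow> real) \<Rightarrow> (nat \<Rightarrow> real) \<Rightarrow> (nat \<Rightarrow> real) \<Rightarrow> real \<Rightarrow> real" where
  "u_hat K c w b x = (\<Sum>k<K. c k * tanh (w k * x + b k))"

definition LF :: "real \<Rightarrow> nat \<Rightarrow> (nat \<Rightarrow> real) \<Rightarrow> (nat \<Rightarrow> real) \<Rightarrow> (nat \<Rightarrow> real) \<Rightarrow> real" where
  "LF a K c w b = (1 / (2 * pi)) *
     integral {0..2*pi} (\<lambda>x. (deriv (deriv (u_hat K c w b)) x + a\<^sup>2 * sin (a * x))\<^sup>2)"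

definition LF_tilde :: "real \<Rightarrow> nat \<Rightarrow> (nat \<Rightarrow> real) \<Rightarrow> (nat \<Rightarrow> real) \<Rightarrow> (nat \<Rightarrow> real) \<Rightarrow> (nat \<Rightarrow> real) \<Rightarrow> real" where
  "LF_tilde a K c w b cp = (1 / (2 * pi)) *
     integral {0..2*pi} (\<lambda>x. (deriv (u_hat K cp w b) x + a\<^sup>2 * sin (a * x))\<^sup>2
                              + (u_hat K cp w b x - deriv (u_hat K c w b) x)\<^sup>2)"

end

theory Submission
  imports Defs "HOL-Computational_Algebra.Polynomial"
begin

text \<open>Both losses are averages over \<open>[0, 2\<pi>]\<close> of squared residuals, and a parameter of the
  \<open>k\<close>-th neuron enters a residual only through that neuron. Differentiating under the integral
  sign, each partial derivative is therefore the average of \<open>2 * residual * \<partial>(neuron k)\<close>.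
  Because \<open>|tanh\<^sup>(\<^sup>j\<^sup>)| \<le> 2\<^sup>j\<close> for \<open>j \<le> 3\<close>, the residuals are bounded by multiples of \<open>S\<close> resp.
  \<open>T\<close>, and the parameter derivatives of the neuron by the stated per-neuron factors
  (using \<open>|x| \<le> 2\<pi> < 8\<close>).\<close>

section \<open>Derivatives of tanh\<close>

text \<open>Since \<open>tanh' = 1 - tanh\<^sup>2\<close>, the \<open>j\<close>-th derivative of \<open>tanh\<close> is \<open>P\<^sub>j (tanh z)\<close> with
  \<open>P\<^sub>0 = X\<close> and \<open>P\<^sub>j\<^sub>+\<^sub>1 = P\<^sub>j' * (1 - X\<^sup>2)\<close>.\<close>

fun tanh_poly :: "nat \<Rightarrow> real poly" where
  "tanh_poly 0 = [:0, 1:]"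
| "tanh_poly (Suc j) = pderiv (tanh_poly j) * [:1, 0, -1:]"

definition tanh_deriv :: "nat \<Rightarrow> real \<Rightarrow> real" where
  "tanh_deriv j z = poly (tanh_poly j) (tanh z)"

lemma tanh_deriv_0 [simp]: "tanh_deriv 0 z = tanh z"
  by (simp add: tanh_deriv_def)

lemma has_real_derivative_tanh_deriv:
  "(tanh_deriv j has_real_derivative tanh_deriv (Suc j) z) (at z)"
  unfolding tanh_deriv_def[abs_def]
  by (auto intro!: derivative_eq_intros simp: algebra_simps power2_eq_square)

lemma continuous_on_tanh_deriv [continuous_intros]:
  "continuous_on S f \<Longrightarrow> continuous_on S (\<lambda>x. tanh_deriv j (f x))"
  unfolding tanh_deriv_def by (auto intro!: continuous_intros)

lemma abs_tanh_deriv_le: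
  assumes "j \<le> 3"
  shows "\<bar>tanh_deriv j z\<bar> \<le> 2 ^ j"
proof -
  define s where "s = tanh z"
  have s: "\<bar>s\<bar> \<le> 1" using tanh_real_bounds[of z] by (auto simp: s_def)
  then have s2: "0 \<le> 1 - s\<^sup>2" "1 - s\<^sup>2 \<le> 1" by (auto simp: abs_square_le_1)
  have "j = 0 \<or> j = 1 \<or> j = 2 \<or> j = 3" using assms by auto
  then show ?thesis
  proof (elim disjE)
    assume "j = 1"
    then show ?thesis using s2
      by (simp add: tanh_deriv_def pderiv_pCons s_def[symmetric] algebra_simps power2_eq_square)
  next
    assume "j = 2"
    have "\<bar>-2 * s * (1 - s\<^sup>2)\<bar> \<le> 2 * 1 * 1"
      unfolding abs_mult using s s2 by (intro mult_mono) auto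
    then show ?thesis using \<open>j = 2\<close>
      by (simp add: tanh_deriv_def numeral_eq_Suc pderiv_pCons s_def[symmetric] algebra_simps power2_eq_square power3_eq_cube)
  next
    assume "j = 3"
    have "\<bar>6 * s\<^sup>2 - 2\<bar> \<le> 4"
      using s2 zero_le_power2[of s] unfolding abs_le_iff by linarith
    then have "\<bar>(6 * s\<^sup>2 - 2) * (1 - s\<^sup>2)\<bar> \<le> 4 * 1"
      unfolding abs_mult using s2 by (intro mult_mono) auto
    then show ?thesis using \<open>j = 3\<close>
      by (simp add: tanh_deriv_def numeral_eq_Suc pderiv_pCons s_def[symmetric] algebra_simps power2_eq_square power3_eq_cube)
  qed (use s in \<open>simp_all add: s_def\<close>)
qed

definition neuron :: "nat \<Rightarrow> real \<Rightarrow> real \<Rightarrow> real \<Rightarrow> real \<Rightarrow> real" where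
  "neuron j c w b x = c * w ^ j * tanh_deriv j (w * x + b)"

definition net :: "nat \<Rightarrow> nat \<Rightarrow> (nat \<Rightarrow> real) \<Rightarrow> (nat \<Rightarrow> real) \<Rightarrow> (nat \<Rightarrow> real) \<Rightarrow> real \<Rightarrow> real" where
  "net j K c w b x = (\<Sum>l<K. neuron j (c l) (w l) (b l) x)"

lemma has_real_derivative_neuron:
  "(neuron j c w b has_real_derivative neuron (Suc j) c w b x) (at x)"
  unfolding neuron_def[abs_def]
  by (auto intro!: derivative_eq_intros DERIV_chain2[OF has_real_derivative_tanh_deriv])

lemma deriv_net: "deriv (net j K c w b) = net (Suc j) K c w b"
  unfolding net_def[abs_def]
  by (auto intro!: DERIV_imp_deriv derivative_eq_intros has_real_derivative_neuron)

lemma u_hat_eq_net: "u_hat K c w b = net 0 K c w b"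
  by (simp add: u_hat_def net_def neuron_def fun_eq_iff)

definition avg :: "(real \<Rightarrow> real) \<Rightarrow> real" where
  "avg f = (1 / (2 * pi)) * integral {0..2*pi} f"

lemma LF_eq_avg: "LF a K c w b = avg (\<lambda>x. (net 2 K c w b x + a\<^sup>2 * sin (a * x))\<^sup>2)"
  by (simp add: LF_def avg_def u_hat_eq_net deriv_net numeral_2_eq_2)

lemma LF_tilde_eq_avg:
  "LF_tilde a K c w b cp = avg (\<lambda>x. (net 1 K cp w b x + a\<^sup>2 * sin (a * x))\<^sup>2
                                      + (net 0 K cp w b x - net 1 K c w b x)\<^sup>2)"
  by (simp add: LF_tilde_def avg_def u_hat_eq_net deriv_net)

section \<open>Differentiation under the average\<close>

lemma has_real_derivative_avg:
  fixes g g' :: "real \<Rightarrow> real \<Rightarrow> real"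
  assumes "\<And>t x. ((\<lambda>t. g t x) has_real_derivative g' t x) (at t)"
    and "\<And>t. continuous_on {0..2*pi} (g t)"
    and "continuous_on UNIV (\<lambda>z. g' (fst z) (snd z))"
  shows "((\<lambda>t. avg (g t)) has_real_derivative avg (g' t0)) (at t0)"
proof -
  have "((\<lambda>t. integral (cbox 0 (2*pi)) (g t)) has_real_derivative integral (cbox 0 (2*pi)) (g' t0)) (at t0 within UNIV)"
  proof (rule leibniz_rule_field_derivative)
    show "continuous_on (UNIV \<times> cbox 0 (2*pi)) (\<lambda>(t, x). g' t x)"
      using continuous_on_subset[OF assms(3)] by (simp add: case_prod_beta)
  qed (use assms(1) integrable_continuous_real[OF assms(2)] in auto)
  then have "((\<lambda>t. integral {0..2*pi} (g t)) has_real_derivative integral {0..2*pi} (g' t0)) (at t0)"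
    by simp
  then show ?thesis
    unfolding avg_def by (rule DERIV_cmult)
qed

lemma abs_avg_le:
  assumes "continuous_on {0..2*pi} f" and "\<And>x. x \<in> {0..2*pi} \<Longrightarrow> \<bar>f x\<bar> \<le> B"
  shows "\<bar>avg f\<bar> \<le> B"
proof -
  have "norm (integral {0..2*pi} f) \<le> integral {0..2*pi} (\<lambda>x. B)"
    using assms by (intro integral_norm_bound_integral integrable_continuous_real) auto
  then show ?thesis
    unfolding avg_def using pi_gt_zero by (simp add: abs_mult divide_le_eq mult.commute)
qed

lemma abs_deriv_avg_squares_le:
  fixes r r' q q' :: "real \<Rightarrow> real \<Rightarrow> real"
  assumes "\<And>t x. ((\<lambda>t. r t x) has_real_derivative r' t x) (at t)"
    and "\<And>t x. ((\<lambda>t. q t x) has_real_derivative q' t x) (at t)"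
    and "continuous_on UNIV (\<lambda>z. r (fst z) (snd z))" "continuous_on UNIV (\<lambda>z. r' (fst z) (snd z))"
    and "continuous_on UNIV (\<lambda>z. q (fst z) (snd z))" "continuous_on UNIV (\<lambda>z. q' (fst z) (snd z))"
    and "\<And>x. x \<in> {0..2*pi} \<Longrightarrow> \<bar>r t0 x\<bar> \<le> A" "\<And>x. x \<in> {0..2*pi} \<Longrightarrow> \<bar>r' t0 x\<bar> \<le> D"
    and "\<And>x. x \<in> {0..2*pi} \<Longrightarrow> \<bar>q t0 x\<bar> \<le> B" "\<And>x. x \<in> {0..2*pi} \<Longrightarrow> \<bar>q' t0 x\<bar> \<le> E"
  shows "\<bar>deriv (\<lambda>t. avg (\<lambda>x. (r t x)\<^sup>2 + (q t x)\<^sup>2)) t0\<bar> \<le> 2 * (A * D + B * E)"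
proof -
  define g' where "g' t x = 2 * r t x * r' t x + 2 * q t x * q' t x" for t x
  have slice: "continuous_on S (f t)" if "continuous_on UNIV (\<lambda>z. f (fst z) (snd z))" for f :: "real \<Rightarrow> real \<Rightarrow> real" and t S
  proof -
    have "continuous_on S (\<lambda>x. (t, x))" by (intro continuous_intros)
    from continuous_on_compose2[OF that this] show ?thesis by simp
  qed
  have cont_g': "continuous_on UNIV (\<lambda>z. g' (fst z) (snd z))"
    unfolding g'_def by (intro continuous_intros assms)
  have "((\<lambda>t. avg (\<lambda>x. (r t x)\<^sup>2 + (q t x)\<^sup>2)) has_real_derivative avg (g' t0)) (at t0)"
    using cont_g' unfolding g'_def
    by (intro has_real_derivative_avg) (auto intro!: derivative_eq_intros continuous_intros slice assms)
  then have "deriv (\<lambda>t. avg (\<lambda>x. (r t x)\<^sup>2 + (q t x)\<^sup>2)) t0 = avg (g' t0)"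
    by (rule DERIV_imp_deriv)
  also have "\<bar>avg (g' t0)\<bar> \<le> 2 * (A * D + B * E)"
  proof (rule abs_avg_le)
    show "continuous_on {0..2*pi} (g' t0)"
      using cont_g' by (rule slice)
  next
    fix x assume x: "x \<in> {0..2*pi}"
    have "\<bar>r t0 x\<bar> * \<bar>r' t0 x\<bar> \<le> A * D" "\<bar>q t0 x\<bar> * \<bar>q' t0 x\<bar> \<le> B * E"
      using assms(7-10)[OF x] by (auto intro!: mult_mono order_trans[OF abs_ge_zero])
    then show "\<bar>g' t0 x\<bar> \<le> 2 * (A * D + B * E)"
      unfolding g'_def using abs_triangle_ineq[of "2 * r t0 x * r' t0 x" "2 * q t0 x * q' t0 x"]
      by (simp add: abs_mult)
  qed
  finally show ?thesis .
qed

lemma abs_deriv_avg_square_le: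
  fixes r r' :: "real \<Rightarrow> real \<Rightarrow> real"
  assumes "\<And>t x. ((\<lambda>t. r t x) has_real_derivative r' t x) (at t)"
    and "continuous_on UNIV (\<lambda>z. r (fst z) (snd z))" "continuous_on UNIV (\<lambda>z. r' (fst z) (snd z))"
    and "\<And>x. x \<in> {0..2*pi} \<Longrightarrow> \<bar>r t0 x\<bar> \<le> A" "\<And>x. x \<in> {0..2*pi} \<Longrightarrow> \<bar>r' t0 x\<bar> \<le> D"
  shows "\<bar>deriv (\<lambda>t. avg (\<lambda>x. (r t x)\<^sup>2)) t0\<bar> \<le> 2 * (A * D)"
  using abs_deriv_avg_squares_le[where q = "\<lambda>t x. 0" and q' = "\<lambda>t x. 0" and B = 0 and E = 0, OF assms(1) _ assms(2,3)]
    assms(4,5) by simp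

section \<open>Perturbing one neuron\<close>

definition neuron_dc :: "nat \<Rightarrow> real \<Rightarrow> real \<Rightarrow> real \<Rightarrow> real" where
  "neuron_dc j w b x = w ^ j * tanh_deriv j (w * x + b)"

text \<open>At \<open>j = 0\<close> the first summand of \<open>neuron_dw\<close> vanishes, so the truncated exponent \<open>j - 1\<close> is harmless.\<close>

definition neuron_dw :: "nat \<Rightarrow> real \<Rightarrow> real \<Rightarrow> real \<Rightarrow> real \<Rightarrow> real" where
  "neuron_dw j c w b x =
     c * (real j * w ^ (j - 1) * tanh_deriv j (w * x + b) + w ^ j * x * tanh_deriv (Suc j) (w * x + b))"

definition neuron_db :: "nat \<Rightarrow> real \<Rightarrow> real \<Rightarrow> real \<Rightarrow> real \<Rightarrow> real" where
  "neuron_db j c w b x = c * w ^ j * tanh_deriv (Suc j) (w * x + b)"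

lemma has_real_derivative_neuron_c:
  "((\<lambda>t. neuron j t w b x) has_real_derivative neuron_dc j w b x) (at t)"
  unfolding neuron_def neuron_dc_def by (auto intro!: derivative_eq_intros)

lemma has_real_derivative_neuron_w:
  "((\<lambda>t. neuron j c t b x) has_real_derivative neuron_dw j c t b x) (at t)"
  unfolding neuron_def neuron_dw_def
  by (auto intro!: derivative_eq_intros DERIV_chain2[OF has_real_derivative_tanh_deriv]
           simp: algebra_simps)

lemma has_real_derivative_neuron_b:
  "((\<lambda>t. neuron j c w t x) has_real_derivative neuron_db j c w t x) (at t)"
  unfolding neuron_def neuron_db_def
  by (auto intro!: derivative_eq_intros DERIV_chain2[OF has_real_derivative_tanh_deriv])

lemma abs_neuron_le: "j \<le> 3 \<Longrightarrow> \<bar>neuron j c w b x\<bar> \<le> \<bar>c\<bar> * \<bar>w\<bar> ^ j * 2 ^ j"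
  unfolding neuron_def using abs_tanh_deriv_le[of j "w * x + b"]
  by (simp add: abs_mult power_abs mult_left_mono)

lemma abs_neuron_dc_le: "j \<le> 3 \<Longrightarrow> \<bar>neuron_dc j w b x\<bar> \<le> \<bar>w\<bar> ^ j * 2 ^ j"
  unfolding neuron_dc_def using abs_tanh_deriv_le[of j "w * x + b"]
  by (simp add: abs_mult power_abs mult_left_mono)

lemma abs_neuron_db_le: "j \<le> 2 \<Longrightarrow> \<bar>neuron_db j c w b x\<bar> \<le> \<bar>c\<bar> * \<bar>w\<bar> ^ j * 2 ^ Suc j"
  unfolding neuron_db_def using abs_tanh_deriv_le[of "Suc j" "w * x + b"]
  by (simp add: abs_mult power_abs mult_left_mono)

lemma abs_neuron_dw_le:
  assumes "j \<le> 2"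
  shows "\<bar>neuron_dw j c w b x\<bar> \<le> \<bar>c\<bar> * (real j * \<bar>w\<bar> ^ (j - 1) * 2 ^ j + \<bar>w\<bar> ^ j * \<bar>x\<bar> * 2 ^ Suc j)"
proof -
  have "\<bar>real j * w ^ (j - 1) * tanh_deriv j (w * x + b)\<bar> \<le> real j * \<bar>w\<bar> ^ (j - 1) * 2 ^ j"
    using assms abs_tanh_deriv_le[of j "w * x + b"] by (simp add: abs_mult power_abs mult_left_mono)
  moreover have "\<bar>w ^ j * x * tanh_deriv (Suc j) (w * x + b)\<bar> \<le> \<bar>w\<bar> ^ j * \<bar>x\<bar> * 2 ^ Suc j"
    using assms abs_tanh_deriv_le[of "Suc j" "w * x + b"] by (simp add: abs_mult power_abs mult_left_mono)
  ultimately show ?thesis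
    unfolding neuron_dw_def abs_mult[of c]
    by (intro mult_left_mono abs_triangle_ineq[THEN order_trans] add_mono) auto
qed

lemma sum_fun_upd:
  fixes f :: "'a \<Rightarrow> 'b \<Rightarrow> 'c::ab_group_add"
  assumes "k \<in> A" "finite A"
  shows "(\<Sum>l\<in>A. f l ((p(k := t)) l)) = (\<Sum>l\<in>A. f l (p l)) + (f k t - f k (p k))"
proof -
  have "(\<Sum>l\<in>A - {k}. f l ((p(k := t)) l)) = (\<Sum>l\<in>A - {k}. f l (p l))"
    by (rule sum.cong) auto
  then show ?thesis
    using sum.remove[OF assms(2,1), of "\<lambda>l. f l ((p(k := t)) l)"] sum.remove[OF assms(2,1), of "\<lambda>l. f l (p l)"]
    by (simp add: algebra_simps)
qed

lemma net_upd_c: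
  "k < K \<Longrightarrow> net j K (c(k := t)) w b x = net j K c w b x + (neuron j t (w k) (b k) x - neuron j (c k) (w k) (b k) x)"
  unfolding net_def by (rule sum_fun_upd[where f = "\<lambda>l s. neuron j s (w l) (b l) x"]) auto

lemma net_upd_w:
  "k < K \<Longrightarrow> net j K c (w(k := t)) b x = net j K c w b x + (neuron j (c k) t (b k) x - neuron j (c k) (w k) (b k) x)"
  unfolding net_def by (rule sum_fun_upd[where f = "\<lambda>l s. neuron j (c l) s (b l) x"]) auto

lemma net_upd_b:
  "k < K \<Longrightarrow> net j K c w (b(k := t)) x = net j K c w b x + (neuron j (c k) (w k) t x - neuron j (c k) (w k) (b k) x)"
  unfolding net_def by (rule sum_fun_upd[where f = "\<lambda>l s. neuron j (c l) (w l) s x"]) auto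

lemma continuous_on_net [continuous_intros]:
  "continuous_on S f \<Longrightarrow> continuous_on S (\<lambda>z. net j K c w b (f z))"
  unfolding net_def neuron_def by (intro continuous_intros)

lemma abs_net_le: "j \<le> 3 \<Longrightarrow> \<bar>net j K c w b x\<bar> \<le> (\<Sum>l<K. \<bar>c l\<bar> * \<bar>w l\<bar> ^ j) * 2 ^ j"
  unfolding net_def sum_distrib_right
  by (rule order_trans[OF sum_abs sum_mono]) (rule abs_neuron_le)

definition poisson_scale :: "real \<Rightarrow> nat \<Rightarrow> (nat \<Rightarrow> real) \<Rightarrow> (nat \<Rightarrow> real) \<Rightarrow> real" where
  "poisson_scale a K c w = (\<Sum>l<K. \<bar>c l\<bar> * (w l)\<^sup>2) + a\<^sup>2"

definition system_scale :: "real \<Rightarrow> nat \<Rightarrow> (nat \<Rightarrow> real) \<Rightarrow> (nat \<Rightarrow> real) \<Rightarrow> (nat \<Rightarrow> real) \<Rightarrow> real" where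
  "system_scale a K c w cp = (\<Sum>l<K. \<bar>cp l\<bar>) + (\<Sum>l<K. max \<bar>c l\<bar> \<bar>cp l\<bar> * \<bar>w l\<bar>) + a\<^sup>2"

lemma poisson_scale_nonneg: "0 \<le> poisson_scale a K c w"
  by (simp add: poisson_scale_def sum_nonneg)

lemma system_scale_nonneg: "0 \<le> system_scale a K c w cp"
  by (simp add: system_scale_def sum_nonneg)

lemma abs_forcing_le: "\<bar>a\<^sup>2 * sin (a * x)\<bar> \<le> (a::real)\<^sup>2"
  by (simp add: abs_mult mult_left_le)

lemma abs_poisson_residual_le:
  "\<bar>net 2 K c w b x + a\<^sup>2 * sin (a * x)\<bar> \<le> 4 * poisson_scale a K c w"
  using abs_net_le[of 2 K c w b x, simplified] abs_forcing_le[of a x] zero_le_power2[of a]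
  unfolding poisson_scale_def power2_abs by (smt (verit))

lemma sum_abs_le_sum_max:
  fixes c cp w :: "nat \<Rightarrow> real"
  shows "(\<Sum>l<K. \<bar>c l\<bar> * \<bar>w l\<bar>) \<le> (\<Sum>l<K. max \<bar>c l\<bar> \<bar>cp l\<bar> * \<bar>w l\<bar>)"
  by (intro sum_mono mult_right_mono) auto

lemma abs_net1_le: "\<bar>net 1 K c w b x\<bar> \<le> 2 * (\<Sum>l<K. \<bar>c l\<bar> * \<bar>w l\<bar>)"
  using abs_net_le[of 1 K c w b x] by simp

lemma abs_flux_residual_le:
  "\<bar>net 1 K cp w b x + a\<^sup>2 * sin (a * x)\<bar> \<le> 2 * system_scale a K c w cp"
proof -
  have "(\<Sum>l<K. \<bar>cp l\<bar> * \<bar>w l\<bar>) \<le> (\<Sum>l<K. max \<bar>c l\<bar> \<bar>cp l\<bar> * \<bar>w l\<bar>)"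
    using sum_abs_le_sum_max[where c = cp and cp = c and w = w and K = K] by (simp add: max.commute)
  moreover have "0 \<le> (\<Sum>l<K. \<bar>cp l\<bar>)"
    by (simp add: sum_nonneg)
  ultimately show ?thesis
    using abs_net1_le[of K cp w b x] abs_forcing_le[of a x]
      abs_triangle_ineq[of "net 1 K cp w b x" "a\<^sup>2 * sin (a * x)"]
    unfolding system_scale_def by (smt (verit))
qed

lemma abs_gap_residual_le:
  "\<bar>net 0 K cp w b x - net 1 K c w b x\<bar> \<le> 2 * system_scale a K c w cp"
proof -
  have "\<bar>net 0 K cp w b x\<bar> \<le> (\<Sum>l<K. \<bar>cp l\<bar>)"
    using abs_net_le[of 0 K cp w b x] by simp
  moreover have "0 \<le> (\<Sum>l<K. \<bar>cp l\<bar>)"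
    by (simp add: sum_nonneg)
  ultimately show ?thesis
    using abs_net1_le[of K c w b x] sum_abs_le_sum_max[where c = c and cp = cp and w = w and K = K]
      zero_le_power2[of a] abs_triangle_ineq4[of "net 0 K cp w b x" "net 1 K c w b x"]
    unfolding system_scale_def by (smt (verit))
qed

lemma abs_le_8_if_in_period: "x \<in> {0..2*pi} \<Longrightarrow> \<bar>x\<bar> \<le> 8"
  using pi_less_4 by auto

lemma abs_deriv_LF_c_le:
  assumes "k < K"
  shows "\<bar>deriv (\<lambda>t. LF a K (c(k := t)) w b) (c k)\<bar> \<le> 32 * poisson_scale a K c w * (w k)\<^sup>2"
proof -
  have "\<bar>deriv (\<lambda>t. avg (\<lambda>x. (net 2 K (c(k := t)) w b x + a\<^sup>2 * sin (a * x))\<^sup>2)) (c k)\<bar>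
      \<le> 2 * (4 * poisson_scale a K c w * (\<bar>w k\<bar> ^ 2 * 2 ^ 2))"
  proof (rule abs_deriv_avg_square_le[where r' = "\<lambda>t x. neuron_dc 2 (w k) (b k) x"])
    show "((\<lambda>t. net 2 K (c(k := t)) w b x + a\<^sup>2 * sin (a * x)) has_real_derivative neuron_dc 2 (w k) (b k) x) (at t)" for t x
      unfolding net_upd_c[OF assms] by (auto intro!: derivative_eq_intros has_real_derivative_neuron_c)
    show "continuous_on UNIV (\<lambda>z. net 2 K (c(k := fst z)) w b (snd z) + a\<^sup>2 * sin (a * snd z))"
      unfolding net_upd_c[OF assms] neuron_def by (intro continuous_intros)
    show "continuous_on UNIV (\<lambda>z. neuron_dc 2 (w k) (b k) (snd z))"
      unfolding neuron_dc_def by (intro continuous_intros)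
    show "\<bar>net 2 K (c(k := c k)) w b x + a\<^sup>2 * sin (a * x)\<bar> \<le> 4 * poisson_scale a K c w" for x
      using abs_poisson_residual_le by simp
    show "\<bar>neuron_dc 2 (w k) (b k) x\<bar> \<le> \<bar>w k\<bar> ^ 2 * 2 ^ 2" for x
      by (rule abs_neuron_dc_le) simp
  qed
  then show ?thesis
    by (simp add: LF_eq_avg power2_abs)
qed

lemma abs_deriv_LF_w_le:
  assumes "k < K"
  shows "\<bar>deriv (\<lambda>t. LF a K c (w(k := t)) b) (w k)\<bar>
    \<le> 512 * poisson_scale a K c w * \<bar>c k\<bar> * \<bar>w k\<bar> * (\<bar>w k\<bar> + 1)"
proof -
  have "\<bar>deriv (\<lambda>t. avg (\<lambda>x. (net 2 K c (w(k := t)) b x + a\<^sup>2 * sin (a * x))\<^sup>2)) (w k)\<bar>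
      \<le> 2 * (4 * poisson_scale a K c w * (64 * (\<bar>c k\<bar> * \<bar>w k\<bar> * (\<bar>w k\<bar> + 1))))"
  proof (rule abs_deriv_avg_square_le[where r' = "\<lambda>t x. neuron_dw 2 (c k) t (b k) x"])
    show "((\<lambda>t. net 2 K c (w(k := t)) b x + a\<^sup>2 * sin (a * x)) has_real_derivative neuron_dw 2 (c k) t (b k) x) (at t)" for t x
      unfolding net_upd_w[OF assms] by (auto intro!: derivative_eq_intros has_real_derivative_neuron_w)
    show "continuous_on UNIV (\<lambda>z. net 2 K c (w(k := fst z)) b (snd z) + a\<^sup>2 * sin (a * snd z))"
      unfolding net_upd_w[OF assms] neuron_def by (intro continuous_intros)
    show "continuous_on UNIV (\<lambda>z. neuron_dw 2 (c k) (fst z) (b k) (snd z))"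
      unfolding neuron_dw_def by (intro continuous_intros)
    show "\<bar>net 2 K c (w(k := w k)) b x + a\<^sup>2 * sin (a * x)\<bar> \<le> 4 * poisson_scale a K c w" for x
      using abs_poisson_residual_le by simp
    show "\<bar>neuron_dw 2 (c k) (w k) (b k) x\<bar> \<le> 64 * (\<bar>c k\<bar> * \<bar>w k\<bar> * (\<bar>w k\<bar> + 1))"
      if "x \<in> {0..2*pi}" for x
    proof -
      have "\<bar>w k\<bar> ^ 2 * \<bar>x\<bar> \<le> \<bar>w k\<bar> ^ 2 * 8"
        using abs_le_8_if_in_period[OF that] by (simp add: mult_left_mono)
      then have "2 * \<bar>w k\<bar> * 4 + \<bar>w k\<bar> ^ 2 * \<bar>x\<bar> * 8 \<le> 64 * (\<bar>w k\<bar> * (\<bar>w k\<bar> + 1))"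
        by (simp add: algebra_simps power2_eq_square)
      then have "\<bar>c k\<bar> * (2 * \<bar>w k\<bar> * 4 + \<bar>w k\<bar> ^ 2 * \<bar>x\<bar> * 8) \<le> \<bar>c k\<bar> * (64 * (\<bar>w k\<bar> * (\<bar>w k\<bar> + 1)))"
        by (rule mult_left_mono) simp
      with abs_neuron_dw_le[of 2 "c k" "w k" "b k" x] show ?thesis
        by (simp add: algebra_simps)
    qed
  qed
  also have "\<dots> = 512 * poisson_scale a K c w * \<bar>c k\<bar> * \<bar>w k\<bar> * (\<bar>w k\<bar> + 1)"
    by (simp add: algebra_simps)
  finally show ?thesis
    by (simp only: LF_eq_avg)
qed

lemma abs_deriv_LF_b_le:
  assumes "k < K"
  shows "\<bar>deriv (\<lambda>t. LF a K c w (b(k := t))) (b k)\<bar> \<le> 64 * poisson_scale a K c w * \<bar>c k\<bar> * (w k)\<^sup>2"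
proof -
  have "\<bar>deriv (\<lambda>t. avg (\<lambda>x. (net 2 K c w (b(k := t)) x + a\<^sup>2 * sin (a * x))\<^sup>2)) (b k)\<bar>
      \<le> 2 * (4 * poisson_scale a K c w * (\<bar>c k\<bar> * \<bar>w k\<bar> ^ 2 * 2 ^ Suc 2))"
  proof (rule abs_deriv_avg_square_le[where r' = "\<lambda>t x. neuron_db 2 (c k) (w k) t x"])
    show "((\<lambda>t. net 2 K c w (b(k := t)) x + a\<^sup>2 * sin (a * x)) has_real_derivative neuron_db 2 (c k) (w k) t x) (at t)" for t x
      unfolding net_upd_b[OF assms] by (auto intro!: derivative_eq_intros has_real_derivative_neuron_b)
    show "continuous_on UNIV (\<lambda>z. net 2 K c w (b(k := fst z)) (snd z) + a\<^sup>2 * sin (a * snd z))"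
      unfolding net_upd_b[OF assms] neuron_def by (intro continuous_intros)
    show "continuous_on UNIV (\<lambda>z. neuron_db 2 (c k) (w k) (fst z) (snd z))"
      unfolding neuron_db_def by (intro continuous_intros)
    show "\<bar>net 2 K c w (b(k := b k)) x + a\<^sup>2 * sin (a * x)\<bar> \<le> 4 * poisson_scale a K c w" for x
      using abs_poisson_residual_le by simp
    show "\<bar>neuron_db 2 (c k) (w k) (b k) x\<bar> \<le> \<bar>c k\<bar> * \<bar>w k\<bar> ^ 2 * 2 ^ Suc 2" for x
      by (rule abs_neuron_db_le) simp
  qed
  then show ?thesis
    by (simp add: LF_eq_avg power2_abs algebra_simps)
qed

lemma abs_deriv_LF_tilde_c_le:
  assumes "k < K"
  shows "\<bar>deriv (\<lambda>t. LF_tilde a K (c(k := t)) w b cp) (c k)\<bar> \<le> 8 * system_scale a K c w cp * \<bar>w k\<bar>"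
proof -
  have "\<bar>deriv (\<lambda>t. avg (\<lambda>x. (net 1 K cp w b x + a\<^sup>2 * sin (a * x))\<^sup>2
                               + (net 0 K cp w b x - net 1 K (c(k := t)) w b x)\<^sup>2)) (c k)\<bar>
      \<le> 2 * (2 * system_scale a K c w cp * 0 + 2 * system_scale a K c w cp * (\<bar>w k\<bar> ^ 1 * 2 ^ 1))"
  proof (rule abs_deriv_avg_squares_le[where r' = "\<lambda>t x. 0" and q' = "\<lambda>t x. - neuron_dc 1 (w k) (b k) x"])
    show "((\<lambda>t. net 1 K cp w b x + a\<^sup>2 * sin (a * x)) has_real_derivative 0) (at t)" for t x
      by (rule DERIV_const)
    show "((\<lambda>t. net 0 K cp w b x - net 1 K (c(k := t)) w b x) has_real_derivative - neuron_dc 1 (w k) (b k) x) (at t)" for t x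
      unfolding net_upd_c[OF assms] by (auto intro!: derivative_eq_intros has_real_derivative_neuron_c)
    show "continuous_on UNIV (\<lambda>z::real \<times> real. net 1 K cp w b (snd z) + a\<^sup>2 * sin (a * snd z))"
      by (intro continuous_intros)
    show "continuous_on UNIV (\<lambda>z. net 0 K cp w b (snd z) - net 1 K (c(k := fst z)) w b (snd z))"
      unfolding net_upd_c[OF assms] neuron_def by (intro continuous_intros)
    show "continuous_on UNIV (\<lambda>z. - neuron_dc 1 (w k) (b k) (snd z))"
      unfolding neuron_dc_def by (intro continuous_intros)
  qed (use abs_flux_residual_le abs_gap_residual_le abs_neuron_dc_le[of 1] in auto)
  also have "\<dots> = 8 * system_scale a K c w cp * \<bar>w k\<bar>"
    by simp
  finally show ?thesis
    by (simp only: LF_tilde_eq_avg)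
qed

lemma abs_deriv_LF_tilde_cp_le:
  assumes "k < K"
  shows "\<bar>deriv (\<lambda>t. LF_tilde a K c w b (cp(k := t))) (cp k)\<bar> \<le> 12 * system_scale a K c w cp * max \<bar>w k\<bar> 1"
proof -
  have "\<bar>deriv (\<lambda>t. avg (\<lambda>x. (net 1 K (cp(k := t)) w b x + a\<^sup>2 * sin (a * x))\<^sup>2
                               + (net 0 K (cp(k := t)) w b x - net 1 K c w b x)\<^sup>2)) (cp k)\<bar>
      \<le> 2 * (2 * system_scale a K c w cp * (2 * max \<bar>w k\<bar> 1) + 2 * system_scale a K c w cp * max \<bar>w k\<bar> 1)"
  proof (rule abs_deriv_avg_squares_le[where r' = "\<lambda>t x. neuron_dc 1 (w k) (b k) x" and q' = "\<lambda>t x. neuron_dc 0 (w k) (b k) x"])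
    show "((\<lambda>t. net 1 K (cp(k := t)) w b x + a\<^sup>2 * sin (a * x)) has_real_derivative neuron_dc 1 (w k) (b k) x) (at t)" for t x
      unfolding net_upd_c[OF assms] by (auto intro!: derivative_eq_intros has_real_derivative_neuron_c)
    show "((\<lambda>t. net 0 K (cp(k := t)) w b x - net 1 K c w b x) has_real_derivative neuron_dc 0 (w k) (b k) x) (at t)" for t x
      unfolding net_upd_c[OF assms] by (auto intro!: derivative_eq_intros has_real_derivative_neuron_c)
    show "continuous_on UNIV (\<lambda>z. net 1 K (cp(k := fst z)) w b (snd z) + a\<^sup>2 * sin (a * snd z))"
      unfolding net_upd_c[OF assms] neuron_def by (intro continuous_intros)
    show "continuous_on UNIV (\<lambda>z. net 0 K (cp(k := fst z)) w b (snd z) - net 1 K c w b (snd z))"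
      unfolding net_upd_c[OF assms] neuron_def by (intro continuous_intros)
    show "continuous_on UNIV (\<lambda>z. neuron_dc 1 (w k) (b k) (snd z))"
      unfolding neuron_dc_def by (intro continuous_intros)
    show "continuous_on UNIV (\<lambda>z. neuron_dc 0 (w k) (b k) (snd z))"
      unfolding neuron_dc_def by (intro continuous_intros)
    show "\<bar>neuron_dc 1 (w k) (b k) x\<bar> \<le> 2 * max \<bar>w k\<bar> 1" for x
      using abs_neuron_dc_le[of 1 "w k" "b k" x] by simp
    show "\<bar>neuron_dc 0 (w k) (b k) x\<bar> \<le> max \<bar>w k\<bar> 1" for x
      using abs_neuron_dc_le[of 0 "w k" "b k" x] by simp
  qed (use abs_flux_residual_le abs_gap_residual_le in auto)
  also have "\<dots> = 12 * system_scale a K c w cp * max \<bar>w k\<bar> 1"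
    by simp
  finally show ?thesis
    by (simp only: LF_tilde_eq_avg)
qed

lemma abs_deriv_LF_tilde_w_le:
  assumes "k < K"
  shows "\<bar>deriv (\<lambda>t. LF_tilde a K c (w(k := t)) b cp) (w k)\<bar>
    \<le> 336 * system_scale a K c w cp * max \<bar>c k\<bar> \<bar>cp k\<bar> * max \<bar>w k\<bar> 1"
proof -
  define m where "m = max \<bar>c k\<bar> \<bar>cp k\<bar>"
  define M where "M = max \<bar>w k\<bar> 1"
  have m: "\<bar>c k\<bar> \<le> m" "\<bar>cp k\<bar> \<le> m" "0 \<le> m" and M: "\<bar>w k\<bar> \<le> M" "1 \<le> M"
    by (simp_all add: m_def M_def)
  have "\<bar>deriv (\<lambda>t. avg (\<lambda>x. (net 1 K cp (w(k := t)) b x + a\<^sup>2 * sin (a * x))\<^sup>2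
                               + (net 0 K cp (w(k := t)) b x - net 1 K c (w(k := t)) b x)\<^sup>2)) (w k)\<bar>
      \<le> 2 * (2 * system_scale a K c w cp * (34 * (m * M)) + 2 * system_scale a K c w cp * (50 * (m * M)))"
  proof (rule abs_deriv_avg_squares_le[where r' = "\<lambda>t x. neuron_dw 1 (cp k) t (b k) x"
        and q' = "\<lambda>t x. neuron_dw 0 (cp k) t (b k) x - neuron_dw 1 (c k) t (b k) x"])
    show "((\<lambda>t. net 1 K cp (w(k := t)) b x + a\<^sup>2 * sin (a * x)) has_real_derivative neuron_dw 1 (cp k) t (b k) x) (at t)" for t x
      unfolding net_upd_w[OF assms] by (auto intro!: derivative_eq_intros has_real_derivative_neuron_w)
    show "((\<lambda>t. net 0 K cp (w(k := t)) b x - net 1 K c (w(k := t)) b x) has_real_derivative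
        neuron_dw 0 (cp k) t (b k) x - neuron_dw 1 (c k) t (b k) x) (at t)" for t x
      unfolding net_upd_w[OF assms] by (auto intro!: derivative_eq_intros has_real_derivative_neuron_w)
    show "continuous_on UNIV (\<lambda>z. net 1 K cp (w(k := fst z)) b (snd z) + a\<^sup>2 * sin (a * snd z))"
      unfolding net_upd_w[OF assms] neuron_def by (intro continuous_intros)
    show "continuous_on UNIV (\<lambda>z. net 0 K cp (w(k := fst z)) b (snd z) - net 1 K c (w(k := fst z)) b (snd z))"
      unfolding net_upd_w[OF assms] neuron_def by (intro continuous_intros)
    show "continuous_on UNIV (\<lambda>z. neuron_dw 1 (cp k) (fst z) (b k) (snd z))"
      unfolding neuron_dw_def by (intro continuous_intros)
    show "continuous_on UNIV (\<lambda>z. neuron_dw 0 (cp k) (fst z) (b k) (snd z) - neuron_dw 1 (c k) (fst z) (b k) (snd z))"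
      unfolding neuron_dw_def by (intro continuous_intros)
  next
    fix x :: real assume x: "x \<in> {0..2*pi}"
    have wx: "\<bar>w k\<bar> * \<bar>x\<bar> \<le> M * 8"
      using M abs_le_8_if_in_period[OF x] by (intro mult_mono) auto
    have "\<bar>neuron_dw 1 (u k) (w k) (b k) x\<bar> \<le> 34 * (m * M)" if "\<bar>u k\<bar> \<le> m" for u
    proof -
      have "\<bar>u k\<bar> * (2 + \<bar>w k\<bar> * \<bar>x\<bar> * 4) \<le> m * (34 * M)"
        using that wx M by (intro mult_mono) auto
      then show ?thesis
        using abs_neuron_dw_le[of 1 "u k" "w k" "b k" x] by (simp add: mult_ac)
    qed
    then have dw1: "\<bar>neuron_dw 1 (cp k) (w k) (b k) x\<bar> \<le> 34 * (m * M)"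
                   "\<bar>neuron_dw 1 (c k) (w k) (b k) x\<bar> \<le> 34 * (m * M)"
      using m by blast+
    have "\<bar>cp k\<bar> * (\<bar>x\<bar> * 2) \<le> m * (16 * M)"
      using m M abs_le_8_if_in_period[OF x] by (rule_tac mult_mono) auto
    then have dw0: "\<bar>neuron_dw 0 (cp k) (w k) (b k) x\<bar> \<le> 16 * (m * M)"
      using abs_neuron_dw_le[of 0 "cp k" "w k" "b k" x] by (simp add: mult_ac)
    show "\<bar>neuron_dw 1 (cp k) (w k) (b k) x\<bar> \<le> 34 * (m * M)"
      by (fact dw1(1))
    show "\<bar>neuron_dw 0 (cp k) (w k) (b k) x - neuron_dw 1 (c k) (w k) (b k) x\<bar> \<le> 50 * (m * M)"
      using dw0 dw1(2) abs_triangle_ineq4[of "neuron_dw 0 (cp k) (w k) (b k) x" "neuron_dw 1 (c k) (w k) (b k) x"]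
      by linarith
  qed (use abs_flux_residual_le abs_gap_residual_le in auto)
  also have "\<dots> = 336 * system_scale a K c w cp * m * M"
    by simp
  finally show ?thesis
    by (simp only: LF_tilde_eq_avg m_def M_def)
qed

lemma abs_deriv_LF_tilde_b_le:
  assumes "k < K"
  shows "\<bar>deriv (\<lambda>t. LF_tilde a K c w (b(k := t)) cp) (b k)\<bar>
    \<le> 40 * system_scale a K c w cp * max \<bar>c k\<bar> \<bar>cp k\<bar> * max \<bar>w k\<bar> 1"
proof -
  define m where "m = max \<bar>c k\<bar> \<bar>cp k\<bar>"
  define M where "M = max \<bar>w k\<bar> 1"
  have m: "\<bar>c k\<bar> \<le> m" "\<bar>cp k\<bar> \<le> m" "0 \<le> m" and M: "\<bar>w k\<bar> \<le> M" "1 \<le> M"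
    by (simp_all add: m_def M_def)
  have "\<bar>deriv (\<lambda>t. avg (\<lambda>x. (net 1 K cp w (b(k := t)) x + a\<^sup>2 * sin (a * x))\<^sup>2
                               + (net 0 K cp w (b(k := t)) x - net 1 K c w (b(k := t)) x)\<^sup>2)) (b k)\<bar>
      \<le> 2 * (2 * system_scale a K c w cp * (4 * (m * M)) + 2 * system_scale a K c w cp * (6 * (m * M)))"
  proof (rule abs_deriv_avg_squares_le[where r' = "\<lambda>t x. neuron_db 1 (cp k) (w k) t x"
        and q' = "\<lambda>t x. neuron_db 0 (cp k) (w k) t x - neuron_db 1 (c k) (w k) t x"])
    show "((\<lambda>t. net 1 K cp w (b(k := t)) x + a\<^sup>2 * sin (a * x)) has_real_derivative neuron_db 1 (cp k) (w k) t x) (at t)" for t x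
      unfolding net_upd_b[OF assms] by (auto intro!: derivative_eq_intros has_real_derivative_neuron_b)
    show "((\<lambda>t. net 0 K cp w (b(k := t)) x - net 1 K c w (b(k := t)) x) has_real_derivative
        neuron_db 0 (cp k) (w k) t x - neuron_db 1 (c k) (w k) t x) (at t)" for t x
      unfolding net_upd_b[OF assms] by (auto intro!: derivative_eq_intros has_real_derivative_neuron_b)
    show "continuous_on UNIV (\<lambda>z. net 1 K cp w (b(k := fst z)) (snd z) + a\<^sup>2 * sin (a * snd z))"
      unfolding net_upd_b[OF assms] neuron_def by (intro continuous_intros)
    show "continuous_on UNIV (\<lambda>z. net 0 K cp w (b(k := fst z)) (snd z) - net 1 K c w (b(k := fst z)) (snd z))"
      unfolding net_upd_b[OF assms] neuron_def by (intro continuous_intros)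
    show "continuous_on UNIV (\<lambda>z. neuron_db 1 (cp k) (w k) (fst z) (snd z))"
      unfolding neuron_db_def by (intro continuous_intros)
    show "continuous_on UNIV (\<lambda>z. neuron_db 0 (cp k) (w k) (fst z) (snd z) - neuron_db 1 (c k) (w k) (fst z) (snd z))"
      unfolding neuron_db_def by (intro continuous_intros)
  next
    fix x :: real
    have "\<bar>neuron_db 1 (u k) (w k) (b k) x\<bar> \<le> 4 * (m * M)" if "\<bar>u k\<bar> \<le> m" for u
      using abs_neuron_db_le[of 1 "u k" "w k" "b k" x] mult_mono[OF that M(1)] m(3) by simp
    then have db1: "\<bar>neuron_db 1 (cp k) (w k) (b k) x\<bar> \<le> 4 * (m * M)"
                   "\<bar>neuron_db 1 (c k) (w k) (b k) x\<bar> \<le> 4 * (m * M)"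
      using m by blast+
    have "\<bar>neuron_db 0 (cp k) (w k) (b k) x\<bar> \<le> 2 * (m * M)"
      using abs_neuron_db_le[of 0 "cp k" "w k" "b k" x] mult_mono[OF m(2) M(2)] m(3) by simp
    with db1 show "\<bar>neuron_db 1 (cp k) (w k) (b k) x\<bar> \<le> 4 * (m * M)"
      "\<bar>neuron_db 0 (cp k) (w k) (b k) x - neuron_db 1 (c k) (w k) (b k) x\<bar> \<le> 6 * (m * M)"
      using abs_triangle_ineq4[of "neuron_db 0 (cp k) (w k) (b k) x" "neuron_db 1 (c k) (w k) (b k) x"]
      by linarith+
  qed (use abs_flux_residual_le abs_gap_residual_le in auto)
  also have "\<dots> = 40 * system_scale a K c w cp * m * M"
    by simp
  finally show ?thesis
    by (simp only: LF_tilde_eq_avg m_def M_def)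
qed

theorem theorem4p1:
  shows "\<exists>C>0. \<forall>(K::nat) (a::real) (c::nat\<Rightarrow>real) (w::nat\<Rightarrow>real) (b::nat\<Rightarrow>real) (cp::nat\<Rightarrow>real) k.
     k < K \<longrightarrow>
     (let S = (\<Sum>l<K. \<bar>c l\<bar> * (w l)\<^sup>2) + a\<^sup>2;
          T = (\<Sum>l<K. \<bar>cp l\<bar>) + (\<Sum>l<K. max \<bar>c l\<bar> \<bar>cp l\<bar> * \<bar>w l\<bar>) + a\<^sup>2;
          m = max \<bar>c k\<bar> \<bar>cp k\<bar>
      in \<bar>deriv (\<lambda>t. LF a K (c(k := t)) w b) (c k)\<bar> \<le> C * S * (w k)\<^sup>2
       \<and> \<bar>deriv (\<lambda>t. LF a K c (w(k := t)) b) (w k)\<bar> \<le> C * S * \<bar>c k\<bar> * \<bar>w k\<bar> * (\<bar>w k\<bar> + 1)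
       \<and> \<bar>deriv (\<lambda>t. LF a K c w (b(k := t))) (b k)\<bar> \<le> C * S * \<bar>c k\<bar> * (w k)\<^sup>2
       \<and> \<bar>deriv (\<lambda>t. LF_tilde a K (c(k := t)) w b cp) (c k)\<bar> \<le> C * T * \<bar>w k\<bar>
       \<and> \<bar>deriv (\<lambda>t. LF_tilde a K c (w(k := t)) b cp) (w k)\<bar> \<le> C * T * m * max \<bar>w k\<bar> 1
       \<and> \<bar>deriv (\<lambda>t. LF_tilde a K c w (b(k := t)) cp) (b k)\<bar> \<le> C * T * m * max \<bar>w k\<bar> 1
       \<and> \<bar>deriv (\<lambda>t. LF_tilde a K c w b (cp(k := t))) (cp k)\<bar> \<le> C * T * max \<bar>w k\<bar> 1)"
  apply (intro exI[of _ 512] conjI allI impI)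
   apply simp
  subgoal for K a c w b cp k
    unfolding Let_def poisson_scale_def[symmetric] system_scale_def[symmetric]
    by (intro conjI order_trans[OF abs_deriv_LF_c_le] order_trans[OF abs_deriv_LF_w_le]
          order_trans[OF abs_deriv_LF_b_le] order_trans[OF abs_deriv_LF_tilde_c_le]
          order_trans[OF abs_deriv_LF_tilde_w_le] order_trans[OF abs_deriv_LF_tilde_b_le]
          order_trans[OF abs_deriv_LF_tilde_cp_le] mult_right_mono)
       (auto simp: poisson_scale_nonneg system_scale_nonneg)
  done

end
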